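(* Let $G$ be a $\tau$-regular undirected graph with node set $V$, adjacency matrix $A$, and a partition $V=S\cup T$, $S\cap T=\emptyset$, with exactly $m$ edges between $S$ and $T$. Consider the GNN $H_0=X\in\mathbb{R}^{|V|\times d}$, $H_{l+1}=\sigma(H_lW_{1l}^\top+AH_lW_{2l}^\top)$ for $l=0,1,\dots$, where $\sigma$ is the entrywise ReLU and $W_{1l},W_{2l}\in\mathbb{R}^{d\times d}$ satisfy $\|W_{1l}\|_{1\to1}\le1$, $\|W_{2l}\|_{1\to1}\le1$. Let $\alpha\in\mathbb{R}^{|V|\times d}$ satisfy $|\alpha_{ij}|\le\epsilon$ for $i\in S$ and $\alpha_{ij}=0$ for $i\in T$, and let $\varepsilon_l=H_l(X+\alpha)-H_l(X)$, where $H_l(\cdot)$ denotes the $l$-th layer output as a function of the input features. Then for every $l\ge0$ there exist $V_l\in\mathbb{R}^{d}_{\ge0}$ with $\|V_l\|_1\le d$ and $r_l\in\mathbb{R}^{|V|\times d}$ with $\sum_{i,j}|(r_l)_{ij}|\le 2d\epsilon m(l+1)(\tau+1)^l$ such that, entrywise, $$|(\varepsilon_l)_{ij}|\le \epsilon(\tau+1)^l\,(V_l)_j\,(\mathbf{1}_S)_i+(r_l)_{ij}\quad\text{for all } i\in V,\ j\in\{1,\dots,d\}.$$ In particular $\sum_{i\in T}\sum_j|(\varepsilon_l)_{ij}|\le 2d\epsilon m(l+1)(\tau+1)^l$.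
   Context: $\mathbf{1}_S\in\{0,1\}^{|V|}$ is the indicator vector of $S$. For $W\in\mathbb{R}^{d\times d}$, $\|W\|_{1\to1}=\max_k\sum_j|W_{jk}|$ is the operator norm induced by the $\ell_1$ norm (maximum absolute column sum). For a vector $V$, $\|V\|_1=\sum_j|V_j|$. *)

theory Defs
  imports Complex_Main
begin

text \<open>Node features are matrices indexed by a finite node type 'v and a finite
feature type 'd (so d = CARD('d)).\<close>

definition adj :: "('v \<Rightarrow> 'v \<Rightarrow> bool) \<Rightarrow> 'v \<Rightarrow> 'v \<Rightarrow> real" where
  "adj E i u = (if E i u then 1 else 0)"

definition relu :: "real \<Rightarrow> real" where
  "relu x = max 0 x"

primrec gnn :: "('v::finite \<Rightarrow> 'v \<Rightarrow> real) \<Rightarrow> (nat \<Rightarrow> 'd::finite \<Rightarrow> 'd \<Rightarrow> real)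
   \<Rightarrow> (nat \<Rightarrow> 'd \<Rightarrow> 'd \<Rightarrow> real) \<Rightarrow> nat \<Rightarrow> ('v \<Rightarrow> 'd \<Rightarrow> real) \<Rightarrow> 'v \<Rightarrow> 'd \<Rightarrow> real" where
  "gnn A W1 W2 0 X = X"
| "gnn A W1 W2 (Suc l) X = (\<lambda>i j. relu
      ((\<Sum>k\<in>UNIV. gnn A W1 W2 l X i k * W1 l j k)
       + (\<Sum>u\<in>UNIV. A i u * (\<Sum>k\<in>UNIV. gnn A W1 W2 l X u k * W2 l j k))))"

text \<open>Operator norm induced by the l1 norm: maximum absolute column sum.\<close>
definition norm11 :: "('d::finite \<Rightarrow> 'd \<Rightarrow> real) \<Rightarrow> real" where
  "norm11 W = Max (range (\<lambda>k. \<Sum>j\<in>UNIV. \<bar>W j k\<bar>))"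

end

theory Submission imports Defs begin

text \<open>ReLU is 1-Lipschitz, so the error of layer \<open>l + 1\<close> is bounded entrywise by the linear layer
  with absolute weights applied to the error of layer \<open>l\<close>. Write that error as
  \<open>c\<^sub>l V\<^sub>l \<one>\<^sub>S + r\<^sub>l\<close>. Pushing the first term through the layer gives at most \<open>(\<tau> + 1) c\<^sub>l\<close> times
  a new profile on \<open>S\<close>, plus a leak into \<open>T\<close> of total mass at most \<open>c\<^sub>l d m\<close>, since only the
  \<open>m\<close> cut edges carry it; the remainder grows by at most the factor \<open>\<tau> + 1\<close>, because the column
  sums of \<open>A\<close> are \<open>\<tau>\<close> and the weights have column norm at most 1. The masses therefore satisfy
  \<open>B\<^sub>l\<^sub>+\<^sub>1 \<le> (\<tau> + 1) B\<^sub>l + \<epsilon> (\<tau> + 1)\<^sup>l d m\<close>, which the stated bound dominates.\<close>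

lemma relu_dist_le: "\<bar>relu a - relu b\<bar> \<le> \<bar>a - b\<bar>"
  unfolding relu_def by (auto simp: max_def)

lemma sum_abs_column_le_norm11:
  fixes W :: "'d::finite \<Rightarrow> 'd \<Rightarrow> real"
  shows "(\<Sum>j\<in>UNIV. \<bar>W j k\<bar>) \<le> norm11 W"
  unfolding norm11_def by (rule Max_ge) auto

lemma sum_weighted_columns_le:
  fixes W :: "'d::finite \<Rightarrow> 'd \<Rightarrow> real"
  assumes "norm11 W \<le> 1" "\<And>k. 0 \<le> f k"
  shows "(\<Sum>j\<in>UNIV. \<Sum>k\<in>UNIV. f k * \<bar>W j k\<bar>) \<le> (\<Sum>k\<in>UNIV. f k)"
proof -
  have "(\<Sum>j\<in>UNIV. \<Sum>k\<in>UNIV. f k * \<bar>W j k\<bar>) = (\<Sum>k\<in>UNIV. f k * (\<Sum>j\<in>UNIV. \<bar>W j k\<bar>))"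
    by (subst sum.swap) (simp add: sum_distrib_left)
  also have "\<dots> \<le> (\<Sum>k\<in>UNIV. f k)"
    using order_trans[OF sum_abs_column_le_norm11 assms(1)] assms(2)
    by (intro sum_mono) (simp add: mult_left_le)
  finally show ?thesis .
qed

definition abs_layer :: "('v::finite \<Rightarrow> 'v \<Rightarrow> real) \<Rightarrow> ('d::finite \<Rightarrow> 'd \<Rightarrow> real) \<Rightarrow> ('d \<Rightarrow> 'd \<Rightarrow> real)
    \<Rightarrow> ('v \<Rightarrow> 'd \<Rightarrow> real) \<Rightarrow> 'v \<Rightarrow> 'd \<Rightarrow> real" where
  "abs_layer A W1 W2 F i j =
     (\<Sum>k\<in>UNIV. F i k * \<bar>W1 j k\<bar>) + (\<Sum>u\<in>UNIV. A i u * (\<Sum>k\<in>UNIV. F u k * \<bar>W2 j k\<bar>))"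

lemma abs_layer_add:
  "abs_layer A W1 W2 (\<lambda>u k. F u k + G u k) i j = abs_layer A W1 W2 F i j + abs_layer A W1 W2 G i j"
  by (simp add: abs_layer_def algebra_simps sum.distrib)

lemma abs_layer_scale:
  "abs_layer A W1 W2 (\<lambda>u k. c * F u k) i j = c * abs_layer A W1 W2 F i j"
  by (simp add: abs_layer_def sum_distrib_left algebra_simps)

lemma abs_layer_mono:
  assumes "\<And>i u. 0 \<le> A i u" "\<And>u k. F u k \<le> G u k"
  shows "abs_layer A W1 W2 F i j \<le> abs_layer A W1 W2 G i j"
  unfolding abs_layer_def using assms
  by (intro add_mono sum_mono mult_left_mono mult_right_mono) auto

lemma abs_layer_nonneg:
  assumes "\<And>i u. 0 \<le> A i u" "\<And>u k. 0 \<le> F u k"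
  shows "0 \<le> abs_layer A W1 W2 F i j"
  using abs_layer_mono[of A "\<lambda>_ _. 0" F] assms by (simp add: abs_layer_def)

lemma abs_layer_indicator:
  "abs_layer A W1 W2 (\<lambda>u k. of_bool (u \<in> S) * V k) i j
     = of_bool (i \<in> S) * (\<Sum>k\<in>UNIV. V k * \<bar>W1 j k\<bar>) + (\<Sum>u\<in>S. A i u) * (\<Sum>k\<in>UNIV. V k * \<bar>W2 j k\<bar>)"
proof -
  have "(\<Sum>u\<in>UNIV. A i u * (\<Sum>k\<in>UNIV. of_bool (u \<in> S) * V k * \<bar>W2 j k\<bar>))
          = (\<Sum>u\<in>UNIV. of_bool (u \<in> S) * A i u) * (\<Sum>k\<in>UNIV. V k * \<bar>W2 j k\<bar>)"
  proof -
    have "A i u * (\<Sum>k\<in>UNIV. of_bool (u \<in> S) * V k * \<bar>W2 j k\<bar>)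
            = of_bool (u \<in> S) * A i u * (\<Sum>k\<in>UNIV. V k * \<bar>W2 j k\<bar>)" for u
      by (simp add: sum_distrib_left mult_ac)
    then show ?thesis unfolding sum_distrib_right by (rule sum.cong[OF refl])
  qed
  moreover have "(\<Sum>u\<in>UNIV. of_bool (u \<in> S) * A i u) = (\<Sum>u\<in>S. A i u)"
    by (simp add: sum.If_cases)
  ultimately show ?thesis
    by (simp add: abs_layer_def sum_distrib_left mult.assoc)
qed

lemma abs_linear_le_abs_layer:
  fixes A :: "'v::finite \<Rightarrow> 'v \<Rightarrow> real" and F :: "'v \<Rightarrow> 'd::finite \<Rightarrow> real"
  assumes "\<And>i u. 0 \<le> A i u"
  shows "\<bar>(\<Sum>k\<in>UNIV. F i k * U j k) + (\<Sum>u\<in>UNIV. A i u * (\<Sum>k\<in>UNIV. F u k * W j k))\<bar>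
           \<le> abs_layer A U W (\<lambda>u k. \<bar>F u k\<bar>) i j"
proof -
  have "\<bar>\<Sum>u\<in>UNIV. A i u * (\<Sum>k\<in>UNIV. F u k * W j k)\<bar>
          \<le> (\<Sum>u\<in>UNIV. A i u * \<bar>\<Sum>k\<in>UNIV. F u k * W j k\<bar>)"
    using sum_abs[of "\<lambda>u. A i u * (\<Sum>k\<in>UNIV. F u k * W j k)" UNIV] assms by (simp add: abs_mult)
  also have "\<dots> \<le> (\<Sum>u\<in>UNIV. A i u * (\<Sum>k\<in>UNIV. \<bar>F u k\<bar> * \<bar>W j k\<bar>))"
    using assms by (intro sum_mono mult_left_mono) (auto simp: abs_mult[symmetric])
  finally show ?thesis
    unfolding abs_layer_def using sum_abs[of "\<lambda>k. F i k * U j k" UNIV]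
    by (simp add: abs_mult)
qed

lemma sum_abs_layer_le:
  fixes A :: "'v::finite \<Rightarrow> 'v \<Rightarrow> real" and F :: "'v \<Rightarrow> 'd::finite \<Rightarrow> real"
  assumes A: "\<And>i u. 0 \<le> A i u" "\<And>u. (\<Sum>i\<in>UNIV. A i u) = t"
    and W: "norm11 W1 \<le> 1" "norm11 W2 \<le> 1"
    and F: "\<And>u k. 0 \<le> F u k"
  shows "(\<Sum>i\<in>UNIV. \<Sum>j\<in>UNIV. abs_layer A W1 W2 F i j) \<le> (1 + t) * (\<Sum>u\<in>UNIV. \<Sum>k\<in>UNIV. F u k)"
proof -
  define g where "g u = (\<Sum>j\<in>UNIV. \<Sum>k\<in>UNIV. F u k * \<bar>W2 j k\<bar>)" for u
  have t: "0 \<le> t" using A by (metis sum_nonneg)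
  have "(\<Sum>i\<in>UNIV. \<Sum>j\<in>UNIV. \<Sum>u\<in>UNIV. A i u * (\<Sum>k\<in>UNIV. F u k * \<bar>W2 j k\<bar>))
          = (\<Sum>u\<in>UNIV. (\<Sum>i\<in>UNIV. A i u) * g u)"
  proof -
    have "(\<Sum>i\<in>UNIV. \<Sum>j\<in>UNIV. \<Sum>u\<in>UNIV. A i u * (\<Sum>k\<in>UNIV. F u k * \<bar>W2 j k\<bar>))
            = (\<Sum>i\<in>UNIV. \<Sum>u\<in>UNIV. A i u * g u)"
      unfolding g_def by (intro sum.cong refl, subst sum.swap) (simp add: sum_distrib_left)
    also have "\<dots> = (\<Sum>u\<in>UNIV. (\<Sum>i\<in>UNIV. A i u) * g u)"
      by (subst sum.swap) (simp add: sum_distrib_right)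
    finally show ?thesis .
  qed
  also have "\<dots> \<le> t * (\<Sum>u\<in>UNIV. \<Sum>k\<in>UNIV. F u k)"
    unfolding A(2) sum_distrib_left[symmetric] g_def
    using t W F by (intro mult_left_mono sum_mono sum_weighted_columns_le) auto
  finally have "(\<Sum>i\<in>UNIV. \<Sum>j\<in>UNIV. \<Sum>u\<in>UNIV. A i u * (\<Sum>k\<in>UNIV. F u k * \<bar>W2 j k\<bar>))
                  \<le> t * (\<Sum>u\<in>UNIV. \<Sum>k\<in>UNIV. F u k)" .
  moreover have "(\<Sum>i\<in>UNIV. \<Sum>j\<in>UNIV. \<Sum>k\<in>UNIV. F i k * \<bar>W1 j k\<bar>) \<le> (\<Sum>u\<in>UNIV. \<Sum>k\<in>UNIV. F u k)"
    using W F by (intro sum_mono sum_weighted_columns_le) auto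
  ultimately show ?thesis
    by (simp add: abs_layer_def sum.distrib algebra_simps)
qed

lemma gnn_Suc_diff_le:
  fixes A :: "'v::finite \<Rightarrow> 'v \<Rightarrow> real" and X Y :: "'v \<Rightarrow> 'd::finite \<Rightarrow> real"
  assumes "\<And>i u. 0 \<le> A i u"
  shows "\<bar>gnn A W1 W2 (Suc l) Y i j - gnn A W1 W2 (Suc l) X i j\<bar>
           \<le> abs_layer A (W1 l) (W2 l) (\<lambda>u k. \<bar>gnn A W1 W2 l Y u k - gnn A W1 W2 l X u k\<bar>) i j"
proof -
  define D where "D u k = gnn A W1 W2 l Y u k - gnn A W1 W2 l X u k" for u k
  let ?pre = "\<lambda>Z. (\<Sum>k\<in>UNIV. gnn A W1 W2 l Z i k * W1 l j k)
                 + (\<Sum>u\<in>UNIV. A i u * (\<Sum>k\<in>UNIV. gnn A W1 W2 l Z u k * W2 l j k))"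
  have linear: "?pre Y - ?pre X
          = (\<Sum>k\<in>UNIV. D i k * W1 l j k) + (\<Sum>u\<in>UNIV. A i u * (\<Sum>k\<in>UNIV. D u k * W2 l j k))"
    by (simp add: D_def left_diff_distrib right_diff_distrib sum_subtractf)
  have "\<bar>relu (?pre Y) - relu (?pre X)\<bar>
               \<le> \<bar>(\<Sum>k\<in>UNIV. D i k * W1 l j k) + (\<Sum>u\<in>UNIV. A i u * (\<Sum>k\<in>UNIV. D u k * W2 l j k))\<bar>"
    using relu_dist_le[of "?pre Y" "?pre X"] unfolding linear .
  also have "\<dots> \<le> abs_layer A (W1 l) (W2 l) (\<lambda>u k. \<bar>D u k\<bar>) i j"
    by (rule abs_linear_le_abs_layer[OF assms])
  finally show ?thesis by (simp add: D_def)
qed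

definition localized_bound :: "('v::finite \<Rightarrow> 'd::finite \<Rightarrow> real) \<Rightarrow> 'v set \<Rightarrow> real \<Rightarrow> real \<Rightarrow> bool" where
  "localized_bound D S c B \<longleftrightarrow>
     (\<exists>V. (\<forall>j. 0 \<le> V j) \<and> (\<Sum>j\<in>UNIV. V j) \<le> real (card (UNIV :: 'd set)) \<and>
       (\<exists>r. (\<Sum>i\<in>UNIV. \<Sum>j\<in>UNIV. \<bar>r i j\<bar>) \<le> B \<and>
         (\<forall>i j. \<bar>D i j\<bar> \<le> c * V j * of_bool (i \<in> S) + r i j)))"

lemma localized_bound_mono: "localized_bound D S c B \<Longrightarrow> B \<le> B' \<Longrightarrow> localized_bound D S c B'"
  unfolding localized_bound_def by (meson order_trans)

lemma localized_bound_zero: "0 \<le> B \<Longrightarrow> localized_bound (\<lambda>_ _. 0) S c B"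
  unfolding localized_bound_def by (intro exI[of _ "\<lambda>_. 0"] conjI exI[of _ "\<lambda>_ _. 0"]) auto

lemma localized_bound_outside_le:
  assumes "localized_bound D S c B" "T \<inter> S = {}"
  shows "(\<Sum>i\<in>T. \<Sum>j\<in>UNIV. \<bar>D i j\<bar>) \<le> B"
proof -
  obtain V r where r: "(\<Sum>i\<in>UNIV. \<Sum>j\<in>UNIV. \<bar>r i j\<bar>) \<le> B"
    and Dr: "\<And>i j. \<bar>D i j\<bar> \<le> c * V j * of_bool (i \<in> S) + r i j"
    using assms(1) unfolding localized_bound_def by blast
  have "(\<Sum>i\<in>T. \<Sum>j\<in>UNIV. \<bar>D i j\<bar>) \<le> (\<Sum>i\<in>T. \<Sum>j\<in>UNIV. \<bar>r i j\<bar>)"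
  proof (intro sum_mono)
    fix i j assume "i \<in> T"
    then have "i \<notin> S" using assms(2) by blast
    then show "\<bar>D i j\<bar> \<le> \<bar>r i j\<bar>" using Dr[of i j] by simp
  qed
  also have "\<dots> \<le> (\<Sum>i\<in>UNIV. \<Sum>j\<in>UNIV. \<bar>r i j\<bar>)"
    by (intro sum_mono2) (auto intro: sum_nonneg)
  finally show ?thesis using r by linarith
qed

lemma localized_boundE:
  fixes D :: "'v::finite \<Rightarrow> 'd::finite \<Rightarrow> real"
  assumes "localized_bound D S c B"
  obtains V r where "\<And>j. 0 \<le> V j" "(\<Sum>j\<in>UNIV. V j) \<le> real (card (UNIV :: 'd set))"
    and "\<And>i j. 0 \<le> r i j" "(\<Sum>i\<in>UNIV. \<Sum>j\<in>UNIV. r i j) \<le> B"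
    and "\<And>i j. \<bar>D i j\<bar> \<le> c * V j * of_bool (i \<in> S) + r i j"
proof -
  obtain V \<rho> where V: "\<And>j. 0 \<le> V j" "(\<Sum>j\<in>UNIV. V j) \<le> real (card (UNIV :: 'd set))"
    and \<rho>: "(\<Sum>i\<in>UNIV. \<Sum>j\<in>UNIV. \<bar>\<rho> i j\<bar>) \<le> B"
    and D\<rho>: "\<And>i j. \<bar>D i j\<bar> \<le> c * V j * of_bool (i \<in> S) + \<rho> i j"
    using assms unfolding localized_bound_def by auto
  show thesis
  proof (rule that[OF V _ \<rho>])
    show "\<bar>D i j\<bar> \<le> c * V j * of_bool (i \<in> S) + \<bar>\<rho> i j\<bar>" for i j
      using D\<rho>[of i j] by (meson abs_ge_self add_left_mono order_trans)
  qed simp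
qed

text \<open>A node of \<open>S\<close> receives the profile through \<open>\<bar>W1\<bar>\<close> from itself and through \<open>\<bar>W2\<bar>\<close> from at
  most \<open>t\<close> neighbours; normalising by \<open>t + 1\<close> keeps the mass of the new profile below that of \<open>V\<close>.\<close>

definition spread_profile ::
    "real \<Rightarrow> ('d::finite \<Rightarrow> 'd \<Rightarrow> real) \<Rightarrow> ('d \<Rightarrow> 'd \<Rightarrow> real) \<Rightarrow> ('d \<Rightarrow> real) \<Rightarrow> 'd \<Rightarrow> real" where
  "spread_profile t W1 W2 V j =
     ((\<Sum>k\<in>UNIV. V k * \<bar>W1 j k\<bar>) + t * (\<Sum>k\<in>UNIV. V k * \<bar>W2 j k\<bar>)) / (t + 1)"

lemma spread_profile_nonneg:
  "0 \<le> t \<Longrightarrow> (\<And>k. 0 \<le> V k) \<Longrightarrow> 0 \<le> spread_profile t W1 W2 V j"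
  unfolding spread_profile_def by (simp add: sum_nonneg)

lemma sum_spread_profile_le:
  fixes V :: "'d::finite \<Rightarrow> real"
  assumes "norm11 W1 \<le> 1" "norm11 W2 \<le> 1" "0 \<le> t" "\<And>k. 0 \<le> V k"
  shows "(\<Sum>j\<in>UNIV. spread_profile t W1 W2 V j) \<le> (\<Sum>k\<in>UNIV. V k)"
proof -
  have "(\<Sum>j\<in>UNIV. spread_profile t W1 W2 V j)
          = ((\<Sum>j\<in>UNIV. \<Sum>k\<in>UNIV. V k * \<bar>W1 j k\<bar>) + t * (\<Sum>j\<in>UNIV. \<Sum>k\<in>UNIV. V k * \<bar>W2 j k\<bar>)) / (t + 1)"
    unfolding spread_profile_def by (simp add: sum_divide_distrib[symmetric] sum.distrib sum_distrib_left)
  also have "\<dots> \<le> ((\<Sum>k\<in>UNIV. V k) + t * (\<Sum>k\<in>UNIV. V k)) / (t + 1)"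
    using assms sum_weighted_columns_le
    by (intro divide_right_mono add_mono mult_left_mono) auto
  also have "\<dots> = (\<Sum>k\<in>UNIV. V k)"
    using assms(3) by (simp add: field_simps)
  finally show ?thesis .
qed

lemma abs_layer_indicator_le:
  assumes A: "\<And>i u. 0 \<le> A i u" "\<And>i. (\<Sum>u\<in>UNIV. A i u) = t" and V: "\<And>k. 0 \<le> V k"
  shows "abs_layer A U W (\<lambda>u k. of_bool (u \<in> S) * V k) i j
           \<le> (t + 1) * spread_profile t U W V j * of_bool (i \<in> S)
             + of_bool (i \<notin> S) * (\<Sum>u\<in>S. A i u) * (\<Sum>k\<in>UNIV. V k * \<bar>W j k\<bar>)"
proof (cases "i \<in> S")
  case True
  have t: "0 \<le> t" using A by (metis sum_nonneg)
  have "(\<Sum>u\<in>S. A i u) \<le> t"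
    using A sum_mono2[of UNIV S "A i"] by auto
  then have "(\<Sum>u\<in>S. A i u) * (\<Sum>k\<in>UNIV. V k * \<bar>W j k\<bar>) \<le> t * (\<Sum>k\<in>UNIV. V k * \<bar>W j k\<bar>)"
    using V by (intro mult_right_mono sum_nonneg) auto
  with True t show ?thesis
    unfolding abs_layer_indicator spread_profile_def by simp
qed (simp add: abs_layer_indicator)

lemma localized_bound_abs_layer:
  fixes A :: "'v::finite \<Rightarrow> 'v \<Rightarrow> real" and D D' :: "'v \<Rightarrow> 'd::finite \<Rightarrow> real"
  assumes A: "\<And>i u. 0 \<le> A i u" "\<And>i. (\<Sum>u\<in>UNIV. A i u) = t" "\<And>u. (\<Sum>i\<in>UNIV. A i u) = t"
    and cut: "(\<Sum>i\<in>-S. \<Sum>u\<in>S. A i u) = \<mu>"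
    and W: "norm11 W1 \<le> 1" "norm11 W2 \<le> 1"
    and c: "0 \<le> c"
    and D': "\<And>i j. \<bar>D' i j\<bar> \<le> abs_layer A W1 W2 (\<lambda>u k. \<bar>D u k\<bar>) i j"
    and D: "localized_bound D S c B"
  shows "localized_bound D' S (c * (t + 1)) ((t + 1) * B + c * real (card (UNIV :: 'd set)) * \<mu>)"
proof -
  obtain V r where V: "\<And>j. 0 \<le> V j" "(\<Sum>j\<in>UNIV. V j) \<le> real (card (UNIV :: 'd set))"
    and r: "\<And>i j. 0 \<le> r i j" "(\<Sum>i\<in>UNIV. \<Sum>j\<in>UNIV. r i j) \<le> B"
    and Dr: "\<And>i j. \<bar>D i j\<bar> \<le> c * V j * of_bool (i \<in> S) + r i j"
    using localized_boundE[OF D] by blast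
  have t: "0 \<le> t" using A(1,3) by (metis sum_nonneg)
  define a where "a j = (\<Sum>k\<in>UNIV. V k * \<bar>W2 j k\<bar>)" for j
  define leak where "leak i j = of_bool (i \<notin> S) * (\<Sum>u\<in>S. A i u) * a j" for i j
  define r' where "r' i j = abs_layer A W1 W2 r i j + c * leak i j" for i j
  have "\<bar>D' i j\<bar> \<le> c * (t + 1) * spread_profile t W1 W2 V j * of_bool (i \<in> S) + r' i j" for i j
  proof -
    have "\<bar>D u k\<bar> \<le> c * (of_bool (u \<in> S) * V k) + r u k" for u k
      using Dr[of u k] by (simp add: mult_ac)
    then have "\<bar>D' i j\<bar> \<le> abs_layer A W1 W2 (\<lambda>u k. c * (of_bool (u \<in> S) * V k) + r u k) i j"
      by (intro order_trans[OF D' abs_layer_mono[OF A(1)]])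
    also have "\<dots> = c * abs_layer A W1 W2 (\<lambda>u k. of_bool (u \<in> S) * V k) i j + abs_layer A W1 W2 r i j"
      unfolding abs_layer_add abs_layer_scale ..
    also have "\<dots> \<le> c * (t + 1) * spread_profile t W1 W2 V j * of_bool (i \<in> S) + r' i j"
      using mult_left_mono[OF abs_layer_indicator_le[where A = A and V = V and U = W1 and W = W2 and S = S and i = i and j = j,
        OF A(1,2) V(1)] c]
      by (simp add: r'_def leak_def a_def algebra_simps)
    finally show ?thesis .
  qed
  moreover have "(\<Sum>i\<in>UNIV. \<Sum>j\<in>UNIV. r' i j) \<le> (t + 1) * B + c * real (card (UNIV :: 'd set)) * \<mu>"
  proof -
    have mass_r: "(\<Sum>i\<in>UNIV. \<Sum>j\<in>UNIV. abs_layer A W1 W2 r i j) \<le> (t + 1) * B"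
      using order_trans[OF sum_abs_layer_le[of A t W1 W2 r, OF A(1,3) W r(1)] mult_left_mono[OF r(2)]] t
      by (simp add: add.commute)
    have mass_leak: "(\<Sum>i\<in>UNIV. \<Sum>j\<in>UNIV. leak i j) \<le> real (card (UNIV :: 'd set)) * \<mu>"
    proof -
      have "(\<Sum>i\<in>UNIV. \<Sum>j\<in>UNIV. leak i j)
              = (\<Sum>i\<in>UNIV. of_bool (i \<notin> S) * (\<Sum>u\<in>S. A i u)) * (\<Sum>j\<in>UNIV. a j)"
        by (simp only: leak_def sum_product)
      also have "(\<Sum>i\<in>UNIV. of_bool (i \<notin> S) * (\<Sum>u\<in>S. A i u)) = (\<Sum>i\<in>-S. \<Sum>u\<in>S. A i u)"
        by (simp add: sum.If_cases Collect_neg_eq)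
      finally have "(\<Sum>i\<in>UNIV. \<Sum>j\<in>UNIV. leak i j) = (\<Sum>i\<in>-S. \<Sum>u\<in>S. A i u) * (\<Sum>j\<in>UNIV. a j)" .
      moreover have "0 \<le> \<mu>" unfolding cut[symmetric] using A(1) by (simp add: sum_nonneg)
      moreover have "(\<Sum>j\<in>UNIV. a j) \<le> real (card (UNIV :: 'd set))"
        unfolding a_def using sum_weighted_columns_le[OF W(2)] V by (auto intro: order_trans)
      ultimately show ?thesis
        using cut by (simp add: mult.commute mult_left_mono)
    qed
    show ?thesis
      using mass_r mult_left_mono[OF mass_leak c]
      by (simp add: r'_def sum.distrib sum_distrib_left[symmetric] mult.assoc)
  qed
  moreover have "0 \<le> r' i j" for i j
  proof -
    have "0 \<le> leak i j"
      unfolding leak_def a_def using A(1) V(1) by (intro mult_nonneg_nonneg sum_nonneg) auto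
    then show ?thesis
      unfolding r'_def using c abs_layer_nonneg[of A r, OF A(1) r(1)] by simp
  qed
  ultimately show ?thesis
    unfolding localized_bound_def
    using spread_profile_nonneg[OF t V(1)] order_trans[OF sum_spread_profile_le[OF W t V(1)] V(2)]
    by (intro exI[of _ "spread_profile t W1 W2 V"] conjI exI[of _ r']) auto
qed

lemma gnn_diff_localized_bound:
  fixes A :: "'v::finite \<Rightarrow> 'v \<Rightarrow> real" and X Y :: "'v \<Rightarrow> 'd::finite \<Rightarrow> real"
  assumes A: "\<And>i u. 0 \<le> A i u" "\<And>i. (\<Sum>u\<in>UNIV. A i u) = t" "\<And>u. (\<Sum>i\<in>UNIV. A i u) = t"
    and cut: "(\<Sum>i\<in>-S. \<Sum>u\<in>S. A i u) = \<mu>"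
    and W: "\<And>l. norm11 (W1 l) \<le> 1" "\<And>l. norm11 (W2 l) \<le> 1"
    and \<epsilon>: "0 \<le> \<epsilon>"
    and input: "\<And>i j. \<bar>Y i j - X i j\<bar> \<le> \<epsilon> * of_bool (i \<in> S)"
  shows "localized_bound (\<lambda>i j. gnn A W1 W2 l Y i j - gnn A W1 W2 l X i j) S (\<epsilon> * (t + 1) ^ l)
           (2 * real (card (UNIV :: 'd set)) * \<epsilon> * \<mu> * real (l + 1) * (t + 1) ^ l)"
proof -
  have t: "0 \<le> t" using A(1,3) by (metis sum_nonneg)
  have \<mu>: "0 \<le> \<mu>" unfolding cut[symmetric] using A(1) by (simp add: sum_nonneg)
  show ?thesis
  proof (induction l)
    case 0
    show ?case
      unfolding localized_bound_def using input \<epsilon> \<mu>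
      by (intro exI[of _ "\<lambda>_. 1"] conjI exI[of _ "\<lambda>_ _. 0"]) auto
  next
    case (Suc l)
    let ?d = "real (card (UNIV :: 'd set))"
    have "localized_bound (\<lambda>i j. gnn A W1 W2 (Suc l) Y i j - gnn A W1 W2 (Suc l) X i j) S
            (\<epsilon> * (t + 1) ^ l * (t + 1))
            ((t + 1) * (2 * ?d * \<epsilon> * \<mu> * real (l + 1) * (t + 1) ^ l) + \<epsilon> * (t + 1) ^ l * ?d * \<mu>)"
      by (rule localized_bound_abs_layer[OF A cut W(1) W(2) _ gnn_Suc_diff_le[OF A(1)] Suc])
        (use \<epsilon> t in simp)
    moreover have "(t + 1) * (2 * ?d * \<epsilon> * \<mu> * real (l + 1) * (t + 1) ^ l) + \<epsilon> * (t + 1) ^ l * ?d * \<mu>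
                     \<le> 2 * ?d * \<epsilon> * \<mu> * real (Suc l + 1) * (t + 1) ^ Suc l"
    proof -
      define K where "K = ?d * \<epsilon> * \<mu> * (t + 1) ^ l"
      have "0 \<le> K" "0 \<le> t * K" unfolding K_def using \<epsilon> \<mu> t by simp_all
      moreover have "2 * ?d * \<epsilon> * \<mu> * real (Suc l + 1) * (t + 1) ^ Suc l
          - ((t + 1) * (2 * ?d * \<epsilon> * \<mu> * real (l + 1) * (t + 1) ^ l) + \<epsilon> * (t + 1) ^ l * ?d * \<mu>)
          = K + 2 * (t * K)"
        unfolding K_def by (simp add: algebra_simps)
      ultimately show ?thesis by linarith
    qed
    ultimately show ?case
      by (auto simp: mult_ac elim: localized_bound_mono)
  qed
qed

lemma sum_adj_row:
  assumes "\<And>v. card {u. E v u} = \<tau>"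
  shows "(\<Sum>u\<in>(UNIV :: 'v::finite set). adj E i u) = real \<tau>"
  using assms[of i] by (simp add: adj_def sum.If_cases)

lemma sum_adj_col:
  assumes "\<And>u v. E u v \<Longrightarrow> E v u" "\<And>v. card {u. E v u} = \<tau>"
  shows "(\<Sum>i\<in>(UNIV :: 'v::finite set). adj E i u) = real \<tau>"
proof -
  have "adj E i u = adj E u i" for i using assms(1) by (auto simp: adj_def)
  then show ?thesis using sum_adj_row[OF assms(2)] by simp
qed

lemma sum_adj_cut:
  fixes E :: "'v::finite \<Rightarrow> 'v \<Rightarrow> bool"
  assumes "\<And>u v. E u v \<Longrightarrow> E v u"
  shows "(\<Sum>i\<in>T. \<Sum>u\<in>S. adj E i u) = real (card {(u, v). u \<in> S \<and> v \<in> T \<and> E u v})"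
proof -
  have "(\<Sum>i\<in>T. \<Sum>u\<in>S. adj E i u) = (\<Sum>p\<in>T \<times> S. adj E (fst p) (snd p))"
    by (simp add: sum.cartesian_product case_prod_beta)
  also have "\<dots> = real (card {p \<in> T \<times> S. E (fst p) (snd p)})"
    by (simp add: adj_def sum.If_cases Int_def conj_commute)
  also have "{p \<in> T \<times> S. E (fst p) (snd p)} = prod.swap ` {(u, v). u \<in> S \<and> v \<in> T \<and> E u v}"
    using assms by auto
  also have "card \<dots> = card {(u, v). u \<in> S \<and> v \<in> T \<and> E u v}"
    by (rule card_image) (simp add: inj_on_def)
  finally show ?thesis .
qed

theorem mainTheorem9:
  fixes E :: "'v::finite \<Rightarrow> 'v \<Rightarrow> bool"
    and S T :: "'v set"
    and \<tau> m :: nat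
    and X \<alpha> :: "'v \<Rightarrow> 'd::finite \<Rightarrow> real"
    and W1 W2 :: "nat \<Rightarrow> 'd \<Rightarrow> 'd \<Rightarrow> real"
    and \<epsilon> :: real
  assumes sym: "\<And>u v. E u v \<Longrightarrow> E v u"
    and irrefl: "\<And>v. \<not> E v v"
    and regular: "\<And>v. card {u. E v u} = \<tau>"
    and part: "S \<union> T = UNIV" "S \<inter> T = {}"
    and cut: "card {(u, v). u \<in> S \<and> v \<in> T \<and> E u v} = m"
    and W1n: "\<And>l. norm11 (W1 l) \<le> 1"
    and W2n: "\<And>l. norm11 (W2 l) \<le> 1"
    and \<alpha>S: "\<And>i j. i \<in> S \<Longrightarrow> \<bar>\<alpha> i j\<bar> \<le> \<epsilon>"
    and \<alpha>T: "\<And>i j. i \<in> T \<Longrightarrow> \<alpha> i j = 0"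
  shows "\<forall>l. (\<exists>V :: 'd \<Rightarrow> real. (\<forall>j. V j \<ge> 0) \<and> (\<Sum>j\<in>UNIV. V j) \<le> real (card (UNIV :: 'd set)) \<and>
            (\<exists>r :: 'v \<Rightarrow> 'd \<Rightarrow> real.
               (\<Sum>i\<in>UNIV. \<Sum>j\<in>UNIV. \<bar>r i j\<bar>)
                 \<le> 2 * real (card (UNIV :: 'd set)) * \<epsilon> * real m * real (l + 1) * (real \<tau> + 1) ^ l \<and>
               (\<forall>i j. \<bar>gnn (adj E) W1 W2 l (\<lambda>i j. X i j + \<alpha> i j) i j - gnn (adj E) W1 W2 l X i j\<bar>
                  \<le> \<epsilon> * (real \<tau> + 1) ^ l * V j * of_bool (i \<in> S) + r i j)))
          \<and> (\<Sum>i\<in>T. \<Sum>j\<in>UNIV. \<bar>gnn (adj E) W1 W2 l (\<lambda>i j. X i j + \<alpha> i j) i j - gnn (adj E) W1 W2 l X i j\<bar>)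
              \<le> 2 * real (card (UNIV :: 'd set)) * \<epsilon> * real m * real (l + 1) * (real \<tau> + 1) ^ l"
proof -
  let ?D = "\<lambda>l i j. gnn (adj E) W1 W2 l (\<lambda>i j. X i j + \<alpha> i j) i j - gnn (adj E) W1 W2 l X i j"
  let ?B = "\<lambda>l. 2 * real (card (UNIV :: 'd set)) * \<epsilon> * real m * real (l + 1) * (real \<tau> + 1) ^ l"
  have T: "T = -S" using part by blast
  have bound: "localized_bound (?D l) S (\<epsilon> * (real \<tau> + 1) ^ l) (?B l)" for l
  proof (cases "0 \<le> \<epsilon>")
    case True
    have "\<bar>X i j + \<alpha> i j - X i j\<bar> \<le> \<epsilon> * of_bool (i \<in> S)" for i j
      using \<alpha>S \<alpha>T T by (cases "i \<in> S") auto
    moreover have "(\<Sum>i\<in>-S. \<Sum>u\<in>S. adj E i u) = real m"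
      using sum_adj_cut[of E S "-S", OF sym] cut T by simp
    ultimately show ?thesis
      using True W1n W2n sum_adj_row[of E, OF regular] sum_adj_col[of E, OF sym regular]
      by (intro gnn_diff_localized_bound) (auto simp: adj_def)
  next
    case False
    then have "S = {}" using \<alpha>S by (meson abs_ge_zero all_not_in_conv order_trans)
    then have "?D l = (\<lambda>_ _. 0)" "m = 0" using \<alpha>T T cut by auto
    then show ?thesis by (simp add: localized_bound_zero)
  qed
  show ?thesis
    using bound localized_bound_outside_le[OF bound, of T] part(2)
    unfolding localized_bound_def by (auto simp: Int_commute)
qed

end
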